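(* Let $\alpha\in[0,1]$ be irrational, $n\geq 2$, and let $\alpha_n=\frac{p_n}{q_n}$ be the $n$-th rational approximant to $\alpha$. Then $v_{\alpha_n}(k)=v_\alpha(k)$ for all $-q_n+1\le k\le q_{n+1}-2$ if $n$ is even, and for all $-q_{n+1}-1\le k\le q_n-2$ if $n$ is odd; and $\widetilde v_{\alpha_n}(k)=\widetilde v_\alpha(k)$ for all $-q_{n+1}-1\le k\le q_n-2$ if $n$ is even, and for all $-q_n+1\le k\le q_{n+1}-2$ if $n$ is odd.
   Context: For $\beta\in[0,1]$: $v_\beta(k)=\chi_{[1-\beta,1)}(k\beta\bmod 1)$ and $\widetilde v_\beta(k)=\chi_{(1-\beta,1]\cup\{0\}}(k\beta\bmod 1)$, $k\in\mathbb{Z}$. Rational approximants: for $\alpha=[a_1,a_2,\dots]$ (continued fraction), $p_{-1}=1,p_0=0,p_n=a_np_{n-1}+p_{n-2}$, $q_{-1}=0,q_0=1,q_n=a_nq_{n-1}+q_{n-2}$, $\alpha_n=p_n/q_n$. *)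

theory Defs
  imports Complex_Main "HOL-Library.Indicator_Function"
begin

definition v_seq :: "real \<Rightarrow> int \<Rightarrow> real" where
  "v_seq \<beta> k = indicator {1 - \<beta> ..< 1} (frac (of_int k * \<beta>))"

definition vt_seq :: "real \<Rightarrow> int \<Rightarrow> real" where
  "vt_seq \<beta> k = indicator ({1 - \<beta> <.. 1} \<union> {0}) (frac (of_int k * \<beta>))"

text \<open>Continued fraction alpha = [a_1, a_2, ...] = 1/(a_1 + 1/(a_2 + ...)) via the Gauss map.
  cf_rem alpha m is the (m+1)-th complete remainder x_{m+1} in (0,1); cf_a alpha n = a_n for n >= 1.\<close>
definition cf_rem :: "real \<Rightarrow> nat \<Rightarrow> real" where
  "cf_rem \<alpha> m = ((\<lambda>x. frac (1 / x)) ^^ m) \<alpha>"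

definition cf_a :: "real \<Rightarrow> nat \<Rightarrow> int" where
  "cf_a \<alpha> n = \<lfloor>1 / cf_rem \<alpha> (n - 1)\<rfloor>"

fun cf_p :: "real \<Rightarrow> nat \<Rightarrow> int" where
  "cf_p \<alpha> 0 = 0"
| "cf_p \<alpha> (Suc 0) = 1"
| "cf_p \<alpha> (Suc (Suc n)) = cf_a \<alpha> (Suc (Suc n)) * cf_p \<alpha> (Suc n) + cf_p \<alpha> n"

fun cf_q :: "real \<Rightarrow> nat \<Rightarrow> int" where
  "cf_q \<alpha> 0 = 1"
| "cf_q \<alpha> (Suc 0) = cf_a \<alpha> 1"
| "cf_q \<alpha> (Suc (Suc n)) = cf_a \<alpha> (Suc (Suc n)) * cf_q \<alpha> (Suc n) + cf_q \<alpha> n"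

definition cf_approx :: "real \<Rightarrow> nat \<Rightarrow> real" where
  "cf_approx \<alpha> n = real_of_int (cf_p \<alpha> n) / real_of_int (cf_q \<alpha> n)"

end

theory Submission
  imports Defs
begin

text \<open>
  For \<open>0 < \<beta> \<le> 1\<close> both sequences are first differences of \<open>k \<mapsto> \<lfloor>k\<beta>\<rfloor>\<close>:
  \<open>v\<^sub>\<beta>(k)\<close> uses the points \<open>k, k + 1\<close> and \<open>\<tilde>v\<^sub>\<beta>(k)\<close> the points \<open>-k - 1, -k\<close>.
  So it suffices that \<open>\<lfloor>j\<alpha>\<rfloor> = \<lfloor>j p\<^sub>n / q\<^sub>n\<rfloor>\<close> on the window
  \<open>-q\<^sub>n < (-1)\<^sup>n j \<le> q\<^sub>n\<^sub>+\<^sub>1 + 1\<close>, which covers both ranges of the theorem.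
  From \<open>\<alpha> = (p\<^sub>n\<^sub>+\<^sub>1 + p\<^sub>n x) / (q\<^sub>n\<^sub>+\<^sub>1 + q\<^sub>n x)\<close> with the complete remainder
  \<open>0 < x < 1\<close> and \<open>p\<^sub>n\<^sub>+\<^sub>1 q\<^sub>n - p\<^sub>n q\<^sub>n\<^sub>+\<^sub>1 = (-1)\<^sup>n\<close> one gets
  \<open>q\<^sub>n \<alpha> - p\<^sub>n = (-1)\<^sup>n e\<close> with \<open>0 < e q\<^sub>n\<^sub>+\<^sub>1 < 1\<close>, hence
  \<open>q\<^sub>n (j\<alpha>) = j p\<^sub>n + J e\<close> with \<open>J = (-1)\<^sup>n j\<close> and \<open>-1 < J e < 2\<close>.
  This perturbation can change the floor only if \<open>J < 0\<close> and \<open>q\<^sub>n | j p\<^sub>n\<close>, which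
  coprimality of \<open>p\<^sub>n, q\<^sub>n\<close> rules out for \<open>0 < |j| < q\<^sub>n\<close>, or if \<open>J = q\<^sub>n\<^sub>+\<^sub>1 + 1\<close> and
  \<open>q\<^sub>n | j p\<^sub>n + 1\<close>, which the determinant identity reduces to \<open>q\<^sub>n | p\<^sub>n\<close>.
  Finally \<open>j = \<plusminus>1\<close> shows \<open>0 < p\<^sub>n / q\<^sub>n < 1\<close>.
\<close>

lemma v_seq_eq_floor_diff:
  assumes "0 \<le> \<beta>" "\<beta> \<le> 1"
  shows "v_seq \<beta> k = of_int (\<lfloor>of_int (k + 1) * \<beta>\<rfloor> - \<lfloor>of_int k * \<beta>\<rfloor>)"
proof -
  define f where "f = frac (of_int k * \<beta>)"
  have f: "0 \<le> f" "f < 1"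
    by (auto simp: f_def frac_lt_1)
  have shift: "of_int (k + 1) * \<beta> = of_int \<lfloor>of_int k * \<beta>\<rfloor> + (f + \<beta>)"
    by (simp add: f_def frac_def algebra_simps)
  show ?thesis
  proof (cases "1 \<le> f + \<beta>")
    case True
    then have "\<lfloor>of_int (k + 1) * \<beta>\<rfloor> = \<lfloor>of_int k * \<beta>\<rfloor> + 1"
      unfolding shift using f assms by (intro floor_unique) auto
    with True f show ?thesis
      by (simp add: v_seq_def f_def[symmetric])
  next
    case False
    then have "\<lfloor>of_int (k + 1) * \<beta>\<rfloor> = \<lfloor>of_int k * \<beta>\<rfloor>"
      unfolding shift using f assms by (intro floor_unique) auto
    with False show ?thesis
      by (simp add: v_seq_def f_def[symmetric])
  qed
qed

lemma vt_seq_eq_floor_diff: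
  assumes "0 < \<beta>" "\<beta> \<le> 1"
  shows "vt_seq \<beta> k = of_int (\<lfloor>of_int (- k) * \<beta>\<rfloor> - \<lfloor>of_int (- k - 1) * \<beta>\<rfloor>)"
proof -
  define f where "f = frac (of_int k * \<beta>)"
  define m where "m = \<lfloor>of_int k * \<beta>\<rfloor>"
  have f: "0 \<le> f" "f < 1"
    by (auto simp: f_def frac_lt_1)
  have neg: "of_int (- k) * \<beta> = - of_int m - f"
    by (simp add: f_def m_def frac_def)
  have neg_pred: "of_int (- k - 1) * \<beta> = - of_int m - (f + \<beta>)"
    by (simp add: f_def m_def frac_def algebra_simps)
  consider "f = 0" | "0 < f" "1 < f + \<beta>" | "0 < f" "f + \<beta> \<le> 1"
    using f by fastforce
  then show ?thesis
  proof cases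
    case 1
    have "\<lfloor>of_int (- k) * \<beta>\<rfloor> = - m" "\<lfloor>of_int (- k - 1) * \<beta>\<rfloor> = - m - 1"
      unfolding neg neg_pred using 1 assms by (intro floor_unique; auto)+
    with 1 show ?thesis
      by (simp add: vt_seq_def f_def[symmetric])
  next
    case 2
    have "\<lfloor>of_int (- k) * \<beta>\<rfloor> = - m - 1" "\<lfloor>of_int (- k - 1) * \<beta>\<rfloor> = - m - 2"
      unfolding neg neg_pred using 2 f assms by (intro floor_unique; auto)+
    with 2 f show ?thesis
      by (simp add: vt_seq_def f_def[symmetric])
  next
    case 3
    have "\<lfloor>of_int (- k) * \<beta>\<rfloor> = - m - 1" "\<lfloor>of_int (- k - 1) * \<beta>\<rfloor> = - m - 1"
      unfolding neg neg_pred using 3 f assms by (intro floor_unique; auto)+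
    with 3 show ?thesis
      by (simp add: vt_seq_def f_def[symmetric])
  qed
qed

lemma floor_add_div_eq_div:
  fixes N q :: int and d :: real
  assumes "0 < q" "-1 < d" "d < 2"
    and "d < 0 \<Longrightarrow> \<not> q dvd N" and "1 \<le> d \<Longrightarrow> \<not> q dvd N + 1"
  shows "\<lfloor>(of_int N + d) / of_int q\<rfloor> = N div q"
proof -
  define r where "r = N mod q"
  have r: "0 \<le> r" "r < q"
    using assms(1) by (auto simp: r_def)
  have "0 \<le> of_int r + d"
  proof (cases "d < 0")
    case True
    then have "r \<noteq> 0"
      using assms(4) by (simp add: r_def dvd_eq_mod_eq_0)
    then show ?thesis
      using r assms(2) by linarith
  qed (use r in simp)
  moreover have "of_int r + d < of_int q"
  proof (cases "1 \<le> d")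
    case True
    have "r \<noteq> q - 1"
    proof
      assume "r = q - 1"
      then have "(N + 1) mod q = 0"
        by (simp add: r_def mod_add_left_eq[symmetric])
      with True assms(5) show False
        by (simp add: dvd_eq_mod_eq_0)
    qed
    then show ?thesis
      using r assms(3) by linarith
  qed (use r in simp)
  moreover have "(of_int N + d) / of_int q = of_int (N div q) + (of_int r + d) / of_int q"
    using assms(1) by (simp add: r_def field_simps flip: of_int_mult of_int_add)
  ultimately show ?thesis
    using assms(1) by (intro floor_unique) simp_all
qed

lemma floor_add_mult_div_eq_div:
  fixes N J q Q :: int and e :: real
  assumes "1 \<le> q" "q \<le> Q" "0 < e" "e * Q < 1" "- q < J" "J \<le> Q + 1"
    and "J < 0 \<Longrightarrow> \<not> q dvd N" and "J = Q + 1 \<Longrightarrow> \<not> q dvd N + 1"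
  shows "\<lfloor>(of_int N + of_int J * e) / of_int q\<rfloor> = N div q"
proof (rule floor_add_div_eq_div)
  have "e \<le> e * Q"
    using assms(1-3) by simp
  then have "of_int J * e \<le> e * Q + e"
    using mult_right_mono[of J "Q + 1" e] assms(3,6) by (simp add: algebra_simps)
  with \<open>e \<le> e * Q\<close> show "of_int J * e < 2"
    using assms(4) by linarith
  have "of_int (- J) * e < 1" if "J < 0"
    using mult_right_mono[of "- J" Q e] assms(2-5) that by (simp add: mult.commute)
  moreover have "0 \<le> of_int J * e" if "\<not> J < 0"
    using that assms(3) by simp
  ultimately show "- 1 < of_int J * e"
    by (cases "J < 0") auto
  show "\<not> q dvd N" if "of_int J * e < 0"
    using that assms(3,7) by (simp add: mult_less_0_iff)
  show "\<not> q dvd N + 1" if "1 \<le> of_int J * e"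
  proof -
    have "\<not> J \<le> Q"
    proof
      assume "J \<le> Q"
      then have "of_int J * e \<le> of_int Q * e"
        using assms(3) by (intro mult_right_mono) simp_all
      with assms(4) that show False
        by (simp add: mult.commute)
    qed
    with assms(6,8) show ?thesis
      by simp
  qed
qed (use assms(1) in simp)

lemma not_dvd_mult_coprime:
  fixes j p q :: int
  assumes "coprime q p" "j \<noteq> 0" "\<bar>j\<bar> < q"
  shows "\<not> q dvd j * p"
  using assms dvd_imp_le_int[of j q] by (auto simp: coprime_dvd_mult_left_iff)

lemma cf_det: "cf_p \<alpha> (Suc n) * cf_q \<alpha> n - cf_p \<alpha> n * cf_q \<alpha> (Suc n) = (-1) ^ n"
  by (induction n) (simp_all add: algebra_simps)

lemma coprime_cf_p_cf_q: "coprime (cf_p \<alpha> n) (cf_q \<alpha> n)"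
proof (rule coprimeI)
  fix c
  assume "c dvd cf_p \<alpha> n" "c dvd cf_q \<alpha> n"
  then have "c dvd (-1) ^ n"
    by (metis cf_det dvd_diff dvd_mult dvd_mult2)
  then show "is_unit c"
    by (rule dvd_unit_imp_unit) simp
qed

lemma cf_q_not_dvd:
  assumes "2 \<le> cf_q \<alpha> n"
  shows "\<not> cf_q \<alpha> n dvd (-1) ^ n * (cf_q \<alpha> (Suc n) + 1) * cf_p \<alpha> n + 1"
proof
  let ?s = "(-1::int) ^ n"
  assume "cf_q \<alpha> n dvd ?s * (cf_q \<alpha> (Suc n) + 1) * cf_p \<alpha> n + 1"
  also have "?s * (cf_q \<alpha> (Suc n) + 1) * cf_p \<alpha> n + 1
      = ?s * (cf_p \<alpha> (Suc n) * cf_q \<alpha> n + cf_p \<alpha> n)"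
    using cf_det[of \<alpha> n] by (simp add: algebra_simps flip: power_add)
  finally have "cf_q \<alpha> n dvd cf_p \<alpha> n"
    by (simp add: dvd_mult_unit_iff' is_unit_power_iff dvd_add_right_iff)
  then have "is_unit (cf_q \<alpha> n)"
    by (rule coprime_common_divisor[OF coprime_cf_p_cf_q _ dvd_refl])
  with assms show False
    by simp
qed

lemma cf_rem_Suc: "cf_rem \<alpha> (Suc m) = frac (1 / cf_rem \<alpha> m)"
  by (simp add: cf_rem_def)

lemma inverse_cf_rem: "1 / cf_rem \<alpha> m = of_int (cf_a \<alpha> (Suc m)) + cf_rem \<alpha> (Suc m)"
  by (simp add: cf_a_def cf_rem_Suc frac_def)

context
  fixes \<alpha> :: real
  assumes alpha_in_unit_interval: "\<alpha> \<in> {0..1}" and alpha_irrational: "\<alpha> \<notin> \<rat>"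
begin

lemma cf_rem_bounds: "0 < cf_rem \<alpha> m \<and> cf_rem \<alpha> m < 1 \<and> cf_rem \<alpha> m \<notin> \<rat>"
proof (induction m)
  case 0
  have "\<alpha> \<noteq> 0" "\<alpha> \<noteq> 1"
    using alpha_irrational by auto
  with alpha_in_unit_interval alpha_irrational show ?case
    by (simp add: cf_rem_def)
next
  case (Suc m)
  then have "frac (1 / cf_rem \<alpha> m) \<notin> \<rat>"
    by (simp flip: inverse_eq_divide)
  then have "frac (1 / cf_rem \<alpha> m) \<noteq> 0"
    by (metis Rats_0)
  with \<open>frac (1 / cf_rem \<alpha> m) \<notin> \<rat>\<close> show ?case
    by (simp add: cf_rem_Suc frac_lt_1 order.not_eq_order_implies_strict)
qed

lemma cf_a_ge_1: "1 \<le> cf_a \<alpha> (Suc m)"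
proof -
  have "1 < 1 / cf_rem \<alpha> m"
    using cf_rem_bounds[of m] by simp
  then show ?thesis
    by (simp add: cf_a_def)
qed

lemma cf_q_pos_mono: "1 \<le> cf_q \<alpha> m \<and> cf_q \<alpha> m \<le> cf_q \<alpha> (Suc m)"
proof (induction m)
  case 0
  show ?case
    using cf_a_ge_1[of 0] by simp
next
  case (Suc m)
  have "0 \<le> cf_q \<alpha> (Suc m)"
    using Suc.IH by linarith
  then have "1 * cf_q \<alpha> (Suc m) \<le> cf_a \<alpha> (Suc (Suc m)) * cf_q \<alpha> (Suc m)"
    by (intro mult_right_mono cf_a_ge_1)
  with Suc.IH show ?case
    unfolding cf_q.simps by linarith
qed

lemma cf_q_ge_2:
  assumes "2 \<le> n"
  shows "2 \<le> cf_q \<alpha> n"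
proof -
  obtain m where n: "n = Suc (Suc m)"
    using assms by (metis add_2_eq_Suc le_Suc_ex)
  have "1 * 1 \<le> cf_a \<alpha> (Suc (Suc m)) * cf_q \<alpha> (Suc m)"
    using cf_a_ge_1[of "Suc m"] cf_q_pos_mono[of "Suc m"] by (intro mult_mono) auto
  with cf_q_pos_mono[of m] show ?thesis
    by (simp add: n)
qed

lemma alpha_cf_rem_expansion:
  "\<alpha> * (cf_q \<alpha> (Suc m) + cf_q \<alpha> m * cf_rem \<alpha> (Suc m))
     = cf_p \<alpha> (Suc m) + cf_p \<alpha> m * cf_rem \<alpha> (Suc m)"
proof (induction m)
  case 0
  have "0 < \<alpha>" "cf_rem \<alpha> 0 = \<alpha>"
    using cf_rem_bounds[of 0] by (simp_all add: cf_rem_def)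
  then show ?case
    using inverse_cf_rem[of \<alpha> 0] by (simp add: field_simps)
next
  case (Suc m)
  define x where "x = cf_rem \<alpha> (Suc m)"
  define x' where "x' = cf_rem \<alpha> (Suc (Suc m))"
  define a where "a = cf_a \<alpha> (Suc (Suc m))"
  have "0 < x"
    using cf_rem_bounds by (simp add: x_def)
  then have inv: "x * (of_int a + x') = 1"
    using inverse_cf_rem[of \<alpha> "Suc m"] by (simp add: x_def x'_def a_def field_simps)
  have shift: "u + v * x = x * ((of_int a * u + v) + u * x')" for u v :: real
  proof -
    have "x * ((of_int a * u + v) + u * x') = u * (x * (of_int a + x')) + v * x"
      by (simp add: algebra_simps)
    then show ?thesis
      by (simp add: inv)
  qed
  have "x * (\<alpha> * (cf_q \<alpha> (Suc (Suc m)) + cf_q \<alpha> (Suc m) * x'))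
      = \<alpha> * (cf_q \<alpha> (Suc m) + cf_q \<alpha> m * x)"
    using shift[of "cf_q \<alpha> (Suc m)" "cf_q \<alpha> m"] by (simp add: a_def ac_simps)
  also have "\<dots> = cf_p \<alpha> (Suc m) + cf_p \<alpha> m * x"
    using Suc.IH by (simp add: x_def)
  also have "\<dots> = x * (cf_p \<alpha> (Suc (Suc m)) + cf_p \<alpha> (Suc m) * x')"
    using shift[of "cf_p \<alpha> (Suc m)" "cf_p \<alpha> m"] by (simp add: a_def ac_simps)
  finally have "x * (\<alpha> * (cf_q \<alpha> (Suc (Suc m)) + cf_q \<alpha> (Suc m) * x'))
      = x * (cf_p \<alpha> (Suc (Suc m)) + cf_p \<alpha> (Suc m) * x')" .
  with \<open>0 < x\<close> show ?case
    by (simp add: x'_def)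
qed

lemma cf_error_bounds:
  "0 < (-1) ^ n * (of_int (cf_q \<alpha> n) * \<alpha> - of_int (cf_p \<alpha> n))"
  "(-1) ^ n * (of_int (cf_q \<alpha> n) * \<alpha> - of_int (cf_p \<alpha> n)) * of_int (cf_q \<alpha> (Suc n)) < 1"
proof -
  define x where "x = cf_rem \<alpha> (Suc n)"
  define D where "D = of_int (cf_q \<alpha> (Suc n)) + of_int (cf_q \<alpha> n) * x"
  define e where "e = (-1) ^ n * (of_int (cf_q \<alpha> n) * \<alpha> - of_int (cf_p \<alpha> n))"
  have "(of_int (cf_q \<alpha> n) * \<alpha> - of_int (cf_p \<alpha> n)) * D
      = of_int (cf_q \<alpha> n) * (\<alpha> * D) - of_int (cf_p \<alpha> n) * D"
    by (simp add: algebra_simps)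
  also have "\<dots> = of_int (cf_p \<alpha> (Suc n) * cf_q \<alpha> n - cf_p \<alpha> n * cf_q \<alpha> (Suc n))"
    using alpha_cf_rem_expansion[of n] by (simp add: D_def x_def algebra_simps)
  finally have "(of_int (cf_q \<alpha> n) * \<alpha> - of_int (cf_p \<alpha> n)) * D = (-1) ^ n"
    by (simp add: cf_det)
  then have "e * D = 1"
    by (simp add: e_def mult.assoc flip: power_add)
  moreover have Q: "0 < (of_int (cf_q \<alpha> (Suc n)) :: real)" "of_int (cf_q \<alpha> (Suc n)) < D"
    using cf_q_pos_mono[of n] cf_q_pos_mono[of "Suc n"] cf_rem_bounds[of "Suc n"]
    by (simp_all add: D_def x_def)
  ultimately have "e = 1 / D"
    by (simp add: eq_divide_eq)
  with Q have "0 < e" "e * of_int (cf_q \<alpha> (Suc n)) < 1"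
    by simp_all
  then show "0 < (-1) ^ n * (of_int (cf_q \<alpha> n) * \<alpha> - of_int (cf_p \<alpha> n))"
    "(-1) ^ n * (of_int (cf_q \<alpha> n) * \<alpha> - of_int (cf_p \<alpha> n)) * of_int (cf_q \<alpha> (Suc n)) < 1"
    by (simp_all add: e_def)
qed

lemma floor_mult_cf_approx_eq:
  assumes "2 \<le> n" "- cf_q \<alpha> n < (-1) ^ n * j" "(-1) ^ n * j \<le> cf_q \<alpha> (Suc n) + 1"
  shows "\<lfloor>of_int j * cf_approx \<alpha> n\<rfloor> = \<lfloor>of_int j * \<alpha>\<rfloor>"
proof -
  define p where "p = cf_p \<alpha> n"
  define q where "q = cf_q \<alpha> n"
  define Q where "Q = cf_q \<alpha> (Suc n)"
  define e where "e = (-1) ^ n * (of_int q * \<alpha> - of_int p)"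
  define J where "J = (-1) ^ n * j"
  have q: "2 \<le> q" "q \<le> Q"
    using cf_q_ge_2[OF assms(1)] cf_q_pos_mono[of n] by (simp_all add: q_def Q_def)
  have j: "j = (-1) ^ n * J"
    by (simp add: J_def flip: mult.assoc power_add)
  have "of_int J * e = ((-1) ^ n * (-1) ^ n) * (of_int j * (of_int q * \<alpha> - of_int p))"
    by (simp add: J_def e_def ac_simps)
  then have "of_int J * e = of_int j * (of_int q * \<alpha> - of_int p)"
    by (simp flip: power_add)
  then have "of_int j * \<alpha> = (of_int (j * p) + of_int J * e) / of_int q"
    using q by (simp add: field_simps)
  also have "\<lfloor>\<dots>\<rfloor> = (j * p) div q"
  proof (rule floor_add_mult_div_eq_div)
    show "0 < e" "e * of_int Q < 1"
      using cf_error_bounds[of n] by (simp_all add: e_def p_def q_def Q_def)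
    show "\<not> q dvd j * p" if "J < 0"
    proof (rule not_dvd_mult_coprime)
      show "coprime q p"
        by (simp add: p_def q_def coprime_commute coprime_cf_p_cf_q)
      have "\<bar>j\<bar> = \<bar>J\<bar>"
        by (simp add: J_def abs_mult power_abs)
      then show "j \<noteq> 0" "\<bar>j\<bar> < q"
        using that assms(2) by (auto simp: J_def q_def)
    qed
    show "\<not> q dvd j * p + 1" if "J = Q + 1"
      using cf_q_not_dvd[of \<alpha> n] q by (simp add: j that p_def q_def Q_def mult.assoc)
  qed (use q assms(2,3) in \<open>simp_all add: J_def q_def Q_def\<close>)
  also have "(j * p) div q = \<lfloor>of_int j * cf_approx \<alpha> n\<rfloor>"
    by (simp add: cf_approx_def p_def q_def floor_divide_of_int_eq flip: of_int_mult)
  finally show ?thesis ..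
qed

lemma cf_approx_bounds:
  assumes "2 \<le> n"
  shows "0 < cf_approx \<alpha> n" "cf_approx \<alpha> n < 1"
proof -
  have q: "2 \<le> cf_q \<alpha> n" "cf_q \<alpha> n \<le> cf_q \<alpha> (Suc n)"
    using cf_q_ge_2[OF assms] cf_q_pos_mono[of n] by simp_all
  have "0 < \<alpha>" "\<alpha> < 1"
    using cf_rem_bounds[of 0] by (simp_all add: cf_rem_def)
  then have "\<lfloor>\<alpha>\<rfloor> = 0" "\<lfloor>- \<alpha>\<rfloor> = - 1"
    by (simp_all add: floor_eq_iff)
  moreover have agree: "\<lfloor>of_int j * cf_approx \<alpha> n\<rfloor> = \<lfloor>of_int j * \<alpha>\<rfloor>" if "\<bar>j\<bar> = 1" for j
    using that q by (intro floor_mult_cf_approx_eq assms)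
      (auto simp: abs_if minus_one_power_iff split: if_splits)
  ultimately have "\<lfloor>cf_approx \<alpha> n\<rfloor> = 0" "\<lfloor>- cf_approx \<alpha> n\<rfloor> = - 1"
    using agree[of 1] agree[of "- 1"] by simp_all
  then show "0 < cf_approx \<alpha> n" "cf_approx \<alpha> n < 1"
    by (simp_all add: floor_eq_iff)
qed

end

theorem lemma4p7:
  fixes \<alpha> :: real and n :: nat
  assumes "\<alpha> \<in> {0..1}" and "\<alpha> \<notin> \<rat>" and "n \<ge> 2"
  shows "(if even n
          then (\<forall>k::int. - cf_q \<alpha> n + 1 \<le> k \<and> k \<le> cf_q \<alpha> (n+1) - 2
                   \<longrightarrow> v_seq (cf_approx \<alpha> n) k = v_seq \<alpha> k)
          else (\<forall>k::int. - cf_q \<alpha> (n+1) - 1 \<le> k \<and> k \<le> cf_q \<alpha> n - 2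
                   \<longrightarrow> v_seq (cf_approx \<alpha> n) k = v_seq \<alpha> k))
       \<and> (if even n
          then (\<forall>k::int. - cf_q \<alpha> (n+1) - 1 \<le> k \<and> k \<le> cf_q \<alpha> n - 2
                   \<longrightarrow> vt_seq (cf_approx \<alpha> n) k = vt_seq \<alpha> k)
          else (\<forall>k::int. - cf_q \<alpha> n + 1 \<le> k \<and> k \<le> cf_q \<alpha> (n+1) - 2
                   \<longrightarrow> vt_seq (cf_approx \<alpha> n) k = vt_seq \<alpha> k))"
proof -
  let ?\<beta> = "cf_approx \<alpha> n"
  let ?W = "\<lambda>j::int. - cf_q \<alpha> n < (-1) ^ n * j \<and> (-1) ^ n * j \<le> cf_q \<alpha> (Suc n) + 1"
  have floors: "\<lfloor>of_int j * ?\<beta>\<rfloor> = \<lfloor>of_int j * \<alpha>\<rfloor>" if "?W j" for j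
    using floor_mult_cf_approx_eq[OF assms] that by blast
  have bounds: "0 < ?\<beta>" "?\<beta> < 1" "0 < \<alpha>" "\<alpha> < 1"
    using cf_approx_bounds[OF assms] cf_rem_bounds[OF assms(1,2), of 0] by (simp_all add: cf_rem_def)
  have v: "v_seq ?\<beta> k = v_seq \<alpha> k" if "?W k" "?W (k + 1)" for k
    using bounds floors[OF that(1)] floors[OF that(2)] by (simp add: v_seq_eq_floor_diff)
  have vt: "vt_seq ?\<beta> k = vt_seq \<alpha> k" if "?W (- k)" "?W (- k - 1)" for k
    using bounds floors[OF that(1)] floors[OF that(2)] by (simp add: vt_seq_eq_floor_diff)
  have "2 \<le> cf_q \<alpha> n" "cf_q \<alpha> n \<le> cf_q \<alpha> (Suc n)"
    using cf_q_ge_2[OF assms] cf_q_pos_mono[OF assms(1,2), of n] by simp_all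
  then show ?thesis
    by (cases "even n") (auto intro!: v vt)
qed

end
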